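(* Let $n\ge 3$. The set $\mathbf{W}^{\ge 6}_{\mathrm{bf}}(n)$ is the unique maximal transition semigroup of a minimal DFA $\mathcal{D}_n$ of a bifix-free language (with the state conventions below) in which there are no colliding pairs of states.
   Context: A language is bifix-free if no word of it is a proper prefix or a proper suffix of another word of it. For a minimal complete DFA $\mathcal{D}_n$ of a bifix-free language with $n$ states the states are named $Q=\{0,\dots,n-1\}$ so that $0$ is initial, $n-1$ is the empty state and $n-2$ is the unique final state (quotient $\{\varepsilon\}$). Transformations act on the right, $q(st)=(qs)t$; the transition semigroup $T(n)$ is the semigroup of transformations of $Q$ induced by nonempty words. Let $Q_M=\{1,\dots,n-3\}$. An unordered pair $\{p,q\}$ of distinct states of $Q_M$ is colliding (in $T(n)$) if there is $t\in T(n)$ with $0t=p$ and $rt=q$ for some $r\in Q_M$. Let $\mathbf{B}_{\mathrm{bf}}(n)$ be the set of all transformations $t$ of $Q$ with $0\notin Qt$, $(n-1)t=n-1$, $(n-2)t=n-1$, and for all $j\ge1$, either $0t^j=n-1$ or $0t^j\ne qt^j$ for all $0<q<n-1$. Then $\mathbf{W}^{\ge 6}_{\mathrm{bf}}(n)=\{t\in\mathbf{B}_{\mathrm{bf}}(n)\mid 0t\in\{n-2,n-1\}$, or $0t\in Q_M$ and $qt\in\{n-2,n-1\}$ for all $q\in Q_M\}$. *)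

theory Defs
  imports "HOL-Library.Sublist"
begin

text \<open>States are the naturals 0..n-1. A DFA over a finite alphabet Alph (letters are naturals)
  is given by a letter-transition function delta; initial state 0, final set {n-2}.
  Letters act on the right; a word a1...ak sends q to delta ak (... (delta a1 q)).\<close>

definition run :: "(nat \<Rightarrow> nat \<Rightarrow> nat) \<Rightarrow> nat list \<Rightarrow> nat \<Rightarrow> nat" where
  "run delta w q = fold delta w q"

definition transf :: "nat \<Rightarrow> (nat \<Rightarrow> nat) set" where
  "transf n = {t. (\<forall>q<n. t q < n) \<and> (\<forall>q\<ge>n. t q = q)}"

definition word_transf :: "nat \<Rightarrow> (nat \<Rightarrow> nat \<Rightarrow> nat) \<Rightarrow> nat list \<Rightarrow> (nat \<Rightarrow> nat)" where
  "word_transf n delta w = (\<lambda>q. if q < n then run delta w q else q)"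

definition trans_sg :: "nat \<Rightarrow> nat set \<Rightarrow> (nat \<Rightarrow> nat \<Rightarrow> nat) \<Rightarrow> (nat \<Rightarrow> nat) set" where
  "trans_sg n Alph delta = {word_transf n delta w | w. w \<in> lists Alph \<and> w \<noteq> []}"

definition lang :: "nat \<Rightarrow> nat set \<Rightarrow> (nat \<Rightarrow> nat \<Rightarrow> nat) \<Rightarrow> nat \<Rightarrow> nat list set" where
  "lang n Alph delta q = {w \<in> lists Alph. run delta w q = n - 2}"

definition bifix_free :: "'a list set \<Rightarrow> bool" where
  "bifix_free L \<longleftrightarrow> (\<forall>u\<in>L. \<forall>v\<in>L. u \<noteq> v \<longrightarrow> \<not> prefix u v \<and> \<not> suffix u v)"

definition is_dfa :: "nat \<Rightarrow> nat set \<Rightarrow> (nat \<Rightarrow> nat \<Rightarrow> nat) \<Rightarrow> bool" where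
  "is_dfa n Alph delta \<longleftrightarrow> finite Alph \<and> (\<forall>a\<in>Alph. \<forall>q<n. delta a q < n)"

definition minimal_dfa :: "nat \<Rightarrow> nat set \<Rightarrow> (nat \<Rightarrow> nat \<Rightarrow> nat) \<Rightarrow> bool" where
  "minimal_dfa n Alph delta \<longleftrightarrow>
     (\<forall>q<n. \<exists>w\<in>lists Alph. run delta w 0 = q) \<and>
     (\<forall>p<n. \<forall>q<n. p \<noteq> q \<longrightarrow> lang n Alph delta p \<noteq> lang n Alph delta q)"

definition bf_dfa :: "nat \<Rightarrow> nat set \<Rightarrow> (nat \<Rightarrow> nat \<Rightarrow> nat) \<Rightarrow> bool" where
  "bf_dfa n Alph delta \<longleftrightarrow>
     is_dfa n Alph delta \<and> minimal_dfa n Alph delta \<and>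
     bifix_free (lang n Alph delta 0) \<and>
     lang n Alph delta (n - 1) = {} \<and> lang n Alph delta (n - 2) = {[]}"

definition QM :: "nat \<Rightarrow> nat set" where
  "QM n = {1..n - 3}"

definition colliding :: "nat \<Rightarrow> (nat \<Rightarrow> nat) set \<Rightarrow> nat \<Rightarrow> nat \<Rightarrow> bool" where
  "colliding n T p q \<longleftrightarrow> p \<in> QM n \<and> q \<in> QM n \<and> p \<noteq> q \<and>
     (\<exists>t\<in>T. t 0 = p \<and> (\<exists>r\<in>QM n. t r = q))"

definition no_colliding :: "nat \<Rightarrow> (nat \<Rightarrow> nat) set \<Rightarrow> bool" where
  "no_colliding n T \<longleftrightarrow> (\<forall>p q. \<not> colliding n T p q)"

definition B_bf :: "nat \<Rightarrow> (nat \<Rightarrow> nat) set" where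
  "B_bf n = {t \<in> transf n. (\<forall>q<n. t q \<noteq> 0) \<and> t (n - 1) = n - 1 \<and> t (n - 2) = n - 1 \<and>
     (\<forall>j\<ge>1. (t ^^ j) 0 = n - 1 \<or> (\<forall>q. 0 < q \<and> q < n - 1 \<longrightarrow> (t ^^ j) 0 \<noteq> (t ^^ j) q))}"

definition W6_bf :: "nat \<Rightarrow> (nat \<Rightarrow> nat) set" where
  "W6_bf n = {t \<in> B_bf n. t 0 \<in> {n - 2, n - 1} \<or>
     (t 0 \<in> QM n \<and> (\<forall>q\<in>QM n. t q \<in> {n - 2, n - 1}))}"

end

theory Submission
  imports Defs
begin

text \<open>If u is a nonempty word and z a word such that z leads from 0 to a state other than
  the empty one, then z cannot act identically after u: completing z v to an accepted word,
  both z v and u z v would be accepted, contradicting suffix-freeness. This forces every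
  element of the transition semigroup into B_bf(n). If moreover t 0 and t q lie in Q_M for
  some q in Q_M, then t 0 and t q are distinct by the first-power condition and form a
  colliding pair; excluding this leaves exactly W6_bf(n).

  Conversely, every element of W6_bf(n) sends all states except 0 into {n-2, n-1} after one
  step, so W6_bf(n) is closed under composition and its higher powers satisfy the B_bf
  condition trivially. Taking all of W6_bf(n) as letters gives a DFA whose transition
  semigroup is W6_bf(n); the letters sending 0 to q and s alone to the final state make it
  minimal, and the first-power condition already makes its language bifix-free.\<close>

lemma run_Nil [simp]: "run delta [] q = q"
  by (simp add: run_def)

lemma run_Cons [simp]: "run delta (a # w) q = run delta w (delta a q)"
  by (simp add: run_def)

lemma run_append [simp]: "run delta (u @ v) q = run delta v (run delta u q)"
  by (simp add: run_def)

lemma run_less: "is_dfa n Alph delta \<Longrightarrow> w \<in> lists Alph \<Longrightarrow> q < n \<Longrightarrow> run delta w q < n"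
  by (induction w arbitrary: q) (auto simp: is_dfa_def)

lemma word_transf_apply [simp]: "q < n \<Longrightarrow> word_transf n delta w q = run delta w q"
  by (simp add: word_transf_def)

lemma word_transf_in_transf:
  "is_dfa n Alph delta \<Longrightarrow> w \<in> lists Alph \<Longrightarrow> word_transf n delta w \<in> transf n"
  by (auto simp: transf_def word_transf_def run_less)

lemma word_transf_Cons:
  assumes "\<forall>q<n. delta a q < n"
  shows "word_transf n delta (a # w) = word_transf n delta w \<circ> word_transf n delta [a]"
  using assms by (auto simp: word_transf_def)

lemma funpow_word_transf:
  assumes "is_dfa n Alph delta" "w \<in> lists Alph" "q < n"
  shows "(word_transf n delta w ^^ j) q = run delta (concat (replicate j w)) q"
  using assms(3)
proof (induction j arbitrary: q)
  case (Suc j)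
  have "(word_transf n delta w ^^ Suc j) q = (word_transf n delta w ^^ j) (run delta w q)"
    using Suc.prems by (simp only: funpow_Suc_right comp_def word_transf_apply)
  then show ?case
    using Suc run_less[OF assms(1,2)] by simp
qed simp

lemma finite_transf: "finite (transf n)"
proof -
  have "inj_on (\<lambda>t. map t [0..<n]) (transf n)"
    by (rule inj_onI) (auto simp: transf_def fun_eq_iff not_less)
  moreover have "(\<lambda>t. map t [0..<n]) ` transf n \<subseteq> {xs. set xs \<subseteq> {0..<n} \<and> length xs = n}"
    by (auto simp: transf_def)
  ultimately show ?thesis
    using finite_lists_length_eq[of "{0..<n}" n] finite_subset finite_imageD by blast
qed

lemma B_bf_iff:
  "t \<in> B_bf n \<longleftrightarrow> t \<in> transf n \<and> (\<forall>q<n. t q \<noteq> 0) \<and> t (n - 1) = n - 1 \<and> t (n - 2) = n - 1 \<and>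
     (\<forall>j\<ge>1. (t ^^ j) 0 = n - 1 \<or> (\<forall>q. 0 < q \<and> q < n - 1 \<longrightarrow> (t ^^ j) 0 \<noteq> (t ^^ j) q))"
  unfolding B_bf_def by (rule mem_Collect_eq)

lemma W6_bf_mem:
  "t \<in> W6_bf n \<longleftrightarrow> t \<in> B_bf n \<and> (t 0 \<in> {n - 2, n - 1} \<or>
     (t 0 \<in> QM n \<and> (\<forall>q\<in>QM n. t q \<in> {n - 2, n - 1})))"
  unfolding W6_bf_def by (rule mem_Collect_eq)

lemma mem_QM_iff: "q \<in> QM n \<longleftrightarrow> 0 < q \<and> q < n \<and> q \<notin> {n - 2, n - 1}"
  by (auto simp: QM_def)

lemma B_bf_first_power:
  "t \<in> B_bf n \<Longrightarrow> t 0 = n - 1 \<or> (\<forall>q. 0 < q \<and> q < n - 1 \<longrightarrow> t 0 \<noteq> t q)"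
proof -
  assume "t \<in> B_bf n"
  then have "(t ^^ 1) 0 = n - 1 \<or> (\<forall>q. 0 < q \<and> q < n - 1 \<longrightarrow> (t ^^ 1) 0 \<noteq> (t ^^ 1) q)"
    unfolding B_bf_iff by blast
  then show ?thesis
    by simp
qed

lemma bf_dfa_two_le: "bf_dfa n Alph delta \<Longrightarrow> 2 \<le> n"
  by (rule ccontr) (auto simp: bf_dfa_def numeral_2_eq_2 less_Suc_eq)

lemma bf_dfa_lang_nonempty:
  assumes "bf_dfa n Alph delta" "s < n" "s \<noteq> n - 1"
  shows "lang n Alph delta s \<noteq> {}"
  using assms unfolding bf_dfa_def minimal_dfa_def
  by (metis diff_less less_nat_zero_code not_gr_zero zero_less_one)

text \<open>Otherwise, for any word v leading from the state reached by z to the final state,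
  z v and u z v would both be accepted.\<close>
lemma bf_dfa_run_prefix_neq:
  assumes bf: "bf_dfa n Alph delta"
    and u: "u \<in> lists Alph" "u \<noteq> []" and z: "z \<in> lists Alph"
    and live: "run delta z 0 \<noteq> n - 1"
  shows "run delta z (run delta u 0) \<noteq> run delta z 0"
proof
  assume eq: "run delta z (run delta u 0) = run delta z 0"
  have "run delta z 0 < n"
    using run_less[of n Alph delta z 0] bf z bf_dfa_two_le[OF bf] by (simp add: bf_dfa_def)
  then obtain v where v: "v \<in> lists Alph" "run delta v (run delta z 0) = n - 2"
    using bf_dfa_lang_nonempty[OF bf _ live] by (auto simp: lang_def)
  have "z @ v \<in> lang n Alph delta 0" "u @ z @ v \<in> lang n Alph delta 0"
    using u z v eq by (auto simp: lang_def)
  moreover have "suffix (z @ v) (u @ z @ v)"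
    by (simp add: suffix_def)
  moreover have "z @ v \<noteq> u @ z @ v"
    using u by simp
  ultimately show False
    using bf by (auto simp: bf_dfa_def bifix_free_def)
qed

lemma bf_dfa_run_eq_empty:
  assumes bf: "bf_dfa n Alph delta" and q: "q < n" "lang n Alph delta q \<subseteq> {[]}"
    and w: "w \<in> lists Alph" "w \<noteq> []"
  shows "run delta w q = n - 1"
proof (rule ccontr)
  assume ne: "run delta w q \<noteq> n - 1"
  have "run delta w q < n"
    using run_less[OF _ w(1) q(1)] bf by (simp add: bf_dfa_def)
  then obtain v where "v \<in> lists Alph" "run delta v (run delta w q) = n - 2"
    using bf_dfa_lang_nonempty[OF bf _ ne] by (auto simp: lang_def)
  then have "w @ v \<in> lang n Alph delta q"
    using w by (simp add: lang_def)
  then show False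
    using q(2) w(2) by auto
qed

lemma trans_sg_subset_B_bf:
  assumes bf: "bf_dfa n Alph delta"
  shows "trans_sg n Alph delta \<subseteq> B_bf n"
proof
  fix t assume "t \<in> trans_sg n Alph delta"
  then obtain w where w: "w \<in> lists Alph" "w \<noteq> []" and t: "t = word_transf n delta w"
    by (auto simp: trans_sg_def)
  have n: "n \<ge> 2"
    using bf by (rule bf_dfa_two_le)
  have dfa: "is_dfa n Alph delta"
    using bf by (simp add: bf_dfa_def)
  have reach: "\<exists>u\<in>lists Alph. run delta u 0 = q" if "q < n" for q
    using bf that by (simp add: bf_dfa_def minimal_dfa_def)
  have t_run: "t q = run delta w q" if "q < n" for q
    using that t by simp
  have "t q \<noteq> 0" if q: "q < n" for q
  proof
    assume "t q = 0"
    obtain u where u: "u \<in> lists Alph" "run delta u 0 = q"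
      using reach[OF q] by blast
    have "run delta [] (run delta (u @ w) 0) \<noteq> run delta [] 0"
      by (rule bf_dfa_run_prefix_neq[OF bf]) (use u w n in auto)
    then show False
      using \<open>t q = 0\<close> t_run[OF q] u(2) by simp
  qed
  moreover have "t (n - 1) = n - 1"
    using bf_dfa_run_eq_empty[OF bf _ _ w, of "n - 1"] t_run[of "n - 1"] bf n
    by (simp add: bf_dfa_def)
  moreover have "t (n - 2) = n - 1"
    using bf_dfa_run_eq_empty[OF bf _ _ w, of "n - 2"] t_run[of "n - 2"] bf n
    by (simp add: bf_dfa_def)
  moreover have "(t ^^ j) 0 \<noteq> (t ^^ j) q"
    if ne: "(t ^^ j) 0 \<noteq> n - 1" and q: "0 < q" "q < n - 1" for j q
  proof -
    let ?z = "concat (replicate j w)"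
    have z: "?z \<in> lists Alph"
      using w(1) by (induction j) auto
    have z_run: "(t ^^ j) p = run delta ?z p" if "p < n" for p
      using funpow_word_transf[OF dfa w(1) that] t by simp
    have "q < n"
      using q(2) by linarith
    then obtain u where u: "u \<in> lists Alph" "run delta u 0 = q"
      using reach by blast
    have "run delta ?z (run delta u 0) \<noteq> run delta ?z 0"
      by (rule bf_dfa_run_prefix_neq[OF bf u(1) _ z]) (use u q ne z_run n in auto)
    then show ?thesis
      using z_run u(2) q n by simp
  qed
  ultimately show "t \<in> B_bf n"
    unfolding B_bf_iff using word_transf_in_transf[OF dfa w(1)] t by blast
qed

lemma B_bf_no_colliding_imp_W6_bf:
  assumes n: "n \<ge> 3" and t: "t \<in> B_bf n" "t \<in> T" and nc: "no_colliding n T"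
  shows "t \<in> W6_bf n"
proof -
  have t_lt: "t q < n" and t_ne0: "t q \<noteq> 0" if "q < n" for q
    using t(1) that unfolding B_bf_iff transf_def by blast+
  have t_QM: "t q \<in> QM n" if "q < n" "t q \<notin> {n - 2, n - 1}" for q
    using t_lt[OF that(1)] t_ne0[OF that(1)] that n by (auto simp: QM_def)
  have "t q \<in> {n - 2, n - 1}" if t0: "t 0 \<notin> {n - 2, n - 1}" and q: "q \<in> QM n" for q
  proof (rule ccontr)
    assume tq: "t q \<notin> {n - 2, n - 1}"
    have "0 < q" "q < n - 1" "q < n"
      using q n by (auto simp: QM_def)
    then have "t 0 \<noteq> t q"
      using B_bf_first_power[OF t(1)] t0 by auto
    then have "colliding n T (t 0) (t q)"
      unfolding colliding_def using t_QM t0 tq \<open>q < n\<close> n t(2) q by auto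
    then show False
      using nc by (simp add: no_colliding_def)
  qed
  moreover have "t 0 \<in> {n - 2, n - 1} \<or> t 0 \<in> QM n"
    using t_QM[of 0] n by auto
  ultimately show ?thesis
    unfolding W6_bf_mem using t(1) by blast
qed

lemma funpow_absorbing:
  assumes "t a = a" "t b = a" "x \<in> {a, b}"
  shows "(t ^^ Suc k) x = a"
proof -
  have "(t ^^ k) a = a"
    using assms(1) by (induction k) auto
  moreover have "t x = a"
    using assms by auto
  ultimately show ?thesis
    by (simp only: funpow_Suc_right comp_def)
qed

text \<open>For the transformations of shape W6, all powers beyond the first send every
  state other than 0 to the empty state, so only the first power matters in the
  definition of B_bf.\<close>
lemma W6_bf_iff:
  assumes n: "n \<ge> 3"
  shows "t \<in> W6_bf n \<longleftrightarrow> t \<in> transf n \<and> (\<forall>q<n. t q \<noteq> 0) \<and>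
    t (n - 1) = n - 1 \<and> t (n - 2) = n - 1 \<and>
    (t 0 \<in> {n - 2, n - 1} \<or> (t 0 \<in> QM n \<and> (\<forall>q\<in>QM n. t q \<in> {n - 2, n - 1}))) \<and>
    (t 0 = n - 1 \<or> (\<forall>q. 0 < q \<and> q < n - 1 \<longrightarrow> t 0 \<noteq> t q))"
    (is "_ \<longleftrightarrow> ?rhs")
proof
  assume "t \<in> W6_bf n"
  then have "t \<in> B_bf n"
    and "t 0 \<in> {n - 2, n - 1} \<or> (t 0 \<in> QM n \<and> (\<forall>q\<in>QM n. t q \<in> {n - 2, n - 1}))"
    unfolding W6_bf_mem by blast+
  then show ?rhs
    using B_bf_first_power unfolding B_bf_iff by blast
next
  assume t: ?rhs
  have absorb: "(t ^^ Suc k) x = n - 1" if "x \<in> {n - 2, n - 1}" for x k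
    using funpow_absorbing[of t "n - 1" "n - 2"] t that by blast
  have "(t ^^ j) 0 = n - 1 \<or> (\<forall>q. 0 < q \<and> q < n - 1 \<longrightarrow> (t ^^ j) 0 \<noteq> (t ^^ j) q)"
    if "j \<ge> 1" for j
  proof (cases "j = 1")
    case True
    then show ?thesis
      using t by simp
  next
    case False
    then obtain k where j: "j = Suc (Suc k)"
      using \<open>j \<ge> 1\<close> by (metis One_nat_def Suc_le_D not0_implies_Suc not_one_le_zero)
    have "(t ^^ j) x = n - 1" if "t x \<in> {n - 2, n - 1}" for x
      using absorb[OF that, of k] by (simp only: j funpow_Suc_right comp_def)
    moreover have "t q \<in> {n - 2, n - 1}" if "t 0 \<notin> {n - 2, n - 1}" "0 < q" "q < n - 1" for q
      using t that n by (cases "q = n - 2") (auto simp: QM_def)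
    ultimately show ?thesis
      by (cases "t 0 \<in> {n - 2, n - 1}") auto
  qed
  then show "t \<in> W6_bf n"
    using t unfolding W6_bf_mem B_bf_iff by blast
qed

lemma W6_bf_comp:
  assumes n: "n \<ge> 3" and f: "f \<in> W6_bf n" and g: "g \<in> W6_bf n"
  shows "g \<circ> f \<in> W6_bf n"
proof -
  note F = f[unfolded W6_bf_iff[OF n]] and G = g[unfolded W6_bf_iff[OF n]]
  have f_lt: "f q < n" if "q < n" for q
    using F that by (simp add: transf_def)
  have g_absorbs: "g x = n - 1" if "x \<in> {n - 2, n - 1}" for x
    using G that by auto
  have absorbed: "(g \<circ> f) 0 = n - 1 \<or> (\<forall>q. 0 < q \<and> q < n - 1 \<longrightarrow> (g \<circ> f) q = n - 1)"
  proof (cases "f 0 \<in> {n - 2, n - 1}")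
    case True
    then show ?thesis
      using g_absorbs by simp
  next
    case False
    have "f q \<in> {n - 2, n - 1}" if "0 < q" "q < n - 1" for q
      using F False that mem_QM_iff[of q] by (cases "q = n - 2") auto
    then show ?thesis
      using g_absorbs by simp
  qed
  have gf_lt: "(g \<circ> f) q < n" and gf_ne0: "(g \<circ> f) q \<noteq> 0" if "q < n" for q
    using F G f_lt[OF that] by (simp_all add: transf_def)
  have "g \<circ> f \<in> transf n"
    using F G by (simp add: transf_def)
  moreover have "(g \<circ> f) (n - 1) = n - 1" "(g \<circ> f) (n - 2) = n - 1"
    using F G by simp_all
  moreover have "(g \<circ> f) 0 \<in> {n - 2, n - 1} \<or> (g \<circ> f) 0 \<in> QM n"
    unfolding mem_QM_iff using gf_lt[of 0] gf_ne0[of 0] n by auto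
  moreover have "(g \<circ> f) 0 \<in> {n - 2, n - 1} \<or> (\<forall>q\<in>QM n. (g \<circ> f) q \<in> {n - 2, n - 1})"
    using absorbed by (auto simp: QM_def)
  moreover have "(g \<circ> f) 0 = n - 1 \<or> (\<forall>q. 0 < q \<and> q < n - 1 \<longrightarrow> (g \<circ> f) 0 \<noteq> (g \<circ> f) q)"
    using absorbed by auto
  ultimately show ?thesis
    unfolding W6_bf_iff[OF n] using gf_ne0 by blast
qed

lemma finite_W6_bf: "finite (W6_bf n)"
  using finite_transf by (rule finite_subset[rotated]) (auto simp: W6_bf_mem B_bf_iff)

lemma no_colliding_if_subset_W6_bf:
  assumes "T \<subseteq> W6_bf n"
  shows "no_colliding n T"
  unfolding no_colliding_def colliding_def
proof (intro allI notI, elim conjE bexE)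
  fix t p q r
  assume "p \<in> QM n" "q \<in> QM n" "t \<in> T" "t 0 = p" "r \<in> QM n" "t r = q"
  moreover have "t \<in> W6_bf n"
    using assms \<open>t \<in> T\<close> by blast
  then have "t 0 \<in> {n - 2, n - 1} \<or> (\<forall>q\<in>QM n. t q \<in> {n - 2, n - 1})"
    unfolding W6_bf_mem by blast
  ultimately show False
    using mem_QM_iff by metis
qed

lemma is_dfa_nth:
  assumes "set xs \<subseteq> transf n"
  shows "is_dfa n {..<length xs} (nth xs)"
  using assms nth_mem by (fastforce simp: is_dfa_def transf_def)

lemma trans_sg_nth_eq:
  assumes xs: "set xs \<subseteq> transf n"
    and closed: "\<And>f g. f \<in> set xs \<Longrightarrow> g \<in> set xs \<Longrightarrow> g \<circ> f \<in> set xs"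
  shows "trans_sg n {..<length xs} (nth xs) = set xs"
proof -
  have letter: "word_transf n (nth xs) [a] = xs ! a" if "a < length xs" for a
    using xs nth_mem[OF that] by (auto simp: word_transf_def transf_def fun_eq_iff not_less)
  have words: "word_transf n (nth xs) w \<in> set xs" if "w \<in> lists {..<length xs}" "w \<noteq> []" for w
    using that
  proof (induction w)
    case (Cons a w)
    then have a: "a < length xs"
      by simp
    show ?case
    proof (cases "w = []")
      case True
      then show ?thesis
        using letter[OF a] a by simp
    next
      case False
      have "\<forall>q<n. (xs ! a) q < n"
        using xs nth_mem[OF a] by (auto simp: transf_def)
      then have "word_transf n (nth xs) (a # w) = word_transf n (nth xs) w \<circ> xs ! a"
        using letter[OF a] word_transf_Cons by metis
      moreover have "word_transf n (nth xs) w \<in> set xs"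
        using Cons.IH Cons.prems False by simp
      ultimately show ?thesis
        using closed nth_mem[OF a] by (simp only:)
    qed
  qed simp
  have letters: "xs ! a \<in> trans_sg n {..<length xs} (nth xs)" if "a < length xs" for a
    unfolding trans_sg_def using letter[OF that, symmetric] that by fastforce
  show ?thesis
  proof
    show "trans_sg n {..<length xs} (nth xs) \<subseteq> set xs"
      using words unfolding trans_sg_def by blast
    show "set xs \<subseteq> trans_sg n {..<length xs} (nth xs)"
      using letters by (metis in_set_conv_nth subsetI)
  qed
qed

lemma trans_sg_subset_B_bfD:
  assumes B: "trans_sg n Alph delta \<subseteq> B_bf n" and n: "0 < n"
    and w: "w \<in> lists Alph" "w \<noteq> []"
  shows "(\<forall>q<n. run delta w q \<noteq> 0) \<and> run delta w (n - 1) = n - 1 \<and>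
      run delta w (n - 2) = n - 1 \<and>
      (run delta w 0 = n - 1 \<or> (\<forall>q. 0 < q \<and> q < n - 1 \<longrightarrow> run delta w 0 \<noteq> run delta w q))"
proof -
  have t: "word_transf n delta w \<in> B_bf n"
    using B w unfolding trans_sg_def by blast
  have "word_transf n delta w q = run delta w q" if "q < n - 1" for q
    using that by simp
  then have "run delta w 0 = n - 1 \<or> (\<forall>q. 0 < q \<and> q < n - 1 \<longrightarrow> run delta w 0 \<noteq> run delta w q)"
    using B_bf_first_power[OF t] by force
  then show ?thesis
    using t n unfolding B_bf_iff by simp
qed

lemma bf_dfa_if_trans_sg_subset_B_bf:
  assumes dfa: "is_dfa n Alph delta" and min: "minimal_dfa n Alph delta"
    and B: "trans_sg n Alph delta \<subseteq> B_bf n" and n: "n \<ge> 2"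
  shows "bf_dfa n Alph delta"
proof -
  have "0 < n"
    using n by simp
  note run_B = trans_sg_subset_B_bfD[OF B this]
  have empty: "lang n Alph delta (n - 1) = {}"
    using run_B n by (force simp: lang_def)
  have final: "lang n Alph delta (n - 2) = {[]}"
    using run_B n by (force simp: lang_def)
  have "\<not> prefix u v" if u: "u \<in> lang n Alph delta 0" and v: "v \<in> lang n Alph delta 0"
    and "u \<noteq> v" for u v
  proof
    assume "prefix u v"
    then obtain x where "v = u @ x" "x \<noteq> []"
      using \<open>u \<noteq> v\<close> by (auto simp: prefix_def)
    then have "x \<in> lang n Alph delta (n - 2)"
      using u v by (simp add: lang_def)
    then show False
      using final \<open>x \<noteq> []\<close> by simp
  qed
  moreover have "\<not> suffix u v" if u: "u \<in> lang n Alph delta 0" and v: "v \<in> lang n Alph delta 0"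
    and "u \<noteq> v" for u v
  proof
    assume "suffix u v"
    then obtain x where x: "v = x @ u" "x \<noteq> []"
      using \<open>u \<noteq> v\<close> by (auto simp: suffix_def)
    have x_lists: "x \<in> lists Alph" and u_lists: "u \<in> lists Alph"
      using v x(1) by (auto simp: lang_def)
    have u0: "run delta u 0 = n - 2" and us: "run delta u (run delta x 0) = n - 2"
      using u v x(1) by (simp_all add: lang_def)
    have x0: "run delta x 0 \<noteq> 0" "run delta x 0 < n"
      using run_B[OF x_lists x(2)] run_less[OF dfa x_lists, of 0] n by auto
    then have "u \<noteq> []"
      using u0 us by auto
    note run_u = run_B[OF u_lists this]
    have "run delta x 0 \<noteq> n - 1"
      using run_u us n by auto
    then have "0 < run delta x 0 \<and> run delta x 0 < n - 1"
      using x0 by linarith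
    moreover have "\<forall>q. 0 < q \<and> q < n - 1 \<longrightarrow> run delta u 0 \<noteq> run delta u q"
      using run_u u0 n by auto
    ultimately have "run delta u 0 \<noteq> run delta u (run delta x 0)"
      by blast
    then show False
      using u0 us by simp
  qed
  ultimately show ?thesis
    unfolding bf_dfa_def bifix_free_def using dfa min empty final by blast
qed

lemma minimal_dfa_if_letters:
  assumes n: "n \<ge> 2"
    and reach: "\<And>q. 0 < q \<Longrightarrow> q < n \<Longrightarrow> \<exists>a\<in>Alph. delta a 0 = q"
    and sep: "\<And>s. s < n - 2 \<Longrightarrow> \<exists>a\<in>Alph. delta a s = n - 2 \<and> (\<forall>r<n. r \<noteq> s \<longrightarrow> delta a r = n - 1)"
  shows "minimal_dfa n Alph delta"
proof -
  have "\<exists>w\<in>lists Alph. run delta w 0 = q" if q: "q < n" for q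
  proof (cases "q = 0")
    case True
    then show ?thesis
      by (intro bexI[of _ "[]"]) simp_all
  next
    case False
    then obtain a where "a \<in> Alph" "delta a 0 = q"
      using reach[of q] q by auto
    then show ?thesis
      by (intro bexI[of _ "[a]"]) simp_all
  qed
  moreover have "\<exists>w. w \<in> lang n Alph delta s \<and> (\<forall>r<n. r \<noteq> s \<longrightarrow> w \<notin> lang n Alph delta r)"
    if s: "s < n" "s \<noteq> n - 1" for s
  proof (cases "s = n - 2")
    case True
    then show ?thesis
      by (intro exI[of _ "[]"]) (simp add: lang_def)
  next
    case False
    with s have "s < n - 2"
      by linarith
    then obtain a where "a \<in> Alph" "delta a s = n - 2" "\<forall>r<n. r \<noteq> s \<longrightarrow> delta a r = n - 1"
      using sep by blast
    then show ?thesis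
      using n by (intro exI[of _ "[a]"]) (auto simp: lang_def)
  qed
  then have "lang n Alph delta p \<noteq> lang n Alph delta q" if "p < n" "q < n" "p \<noteq> q" for p q
    using that by (cases "p = n - 1") (metis, metis)
  ultimately show ?thesis
    unfolding minimal_dfa_def by blast
qed

definition to_state :: "nat \<Rightarrow> nat \<Rightarrow> nat \<Rightarrow> nat" where
  "to_state n q x = (if x = 0 then q else if x < n then n - 1 else x)"

definition accept_from :: "nat \<Rightarrow> nat \<Rightarrow> nat \<Rightarrow> nat" where
  "accept_from n s x = (if x = s then n - 2 else if x < n then n - 1 else x)"

lemma to_state_in_W6_bf:
  assumes "n \<ge> 3" "0 < q" "q < n"
  shows "to_state n q \<in> W6_bf n"
  using assms by (auto simp: W6_bf_iff transf_def to_state_def QM_def)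

lemma accept_from_in_W6_bf:
  assumes "n \<ge> 3" "s < n - 2"
  shows "accept_from n s \<in> W6_bf n"
  using assms by (auto simp: W6_bf_iff transf_def accept_from_def QM_def)

lemma W6_bf_is_trans_sg_of_bf_dfa:
  assumes n: "n \<ge> 3"
  shows "\<exists>Alph delta. bf_dfa n Alph delta \<and> trans_sg n Alph delta = W6_bf n"
proof -
  obtain xs where xs: "set xs = W6_bf n"
    using finite_list[OF finite_W6_bf] by blast
  have W6_transf: "W6_bf n \<subseteq> transf n"
    using n by (auto simp: W6_bf_iff)
  have sg: "trans_sg n {..<length xs} (nth xs) = W6_bf n"
    using trans_sg_nth_eq[of xs n] xs W6_transf W6_bf_comp[OF n] by simp
  have letter: "\<exists>a\<in>{..<length xs}. xs ! a = t" if "t \<in> W6_bf n" for t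
    using that xs by (metis in_set_conv_nth lessThan_iff)
  have "minimal_dfa n {..<length xs} (nth xs)"
  proof (rule minimal_dfa_if_letters)
    show "\<exists>a\<in>{..<length xs}. (xs ! a) 0 = q" if q: "0 < q" "q < n" for q
    proof -
      obtain a where "a \<in> {..<length xs}" "xs ! a = to_state n q"
        using letter[OF to_state_in_W6_bf[OF n q]] by blast
      then show ?thesis
        by (intro bexI[of _ a]) (simp_all add: to_state_def)
    qed
    show "\<exists>a\<in>{..<length xs}. (xs ! a) s = n - 2 \<and> (\<forall>r<n. r \<noteq> s \<longrightarrow> (xs ! a) r = n - 1)"
      if s: "s < n - 2" for s
    proof -
      obtain a where "a \<in> {..<length xs}" "xs ! a = accept_from n s"
        using letter[OF accept_from_in_W6_bf[OF n s]] by blast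
      then show ?thesis
        by (intro bexI[of _ a]) (simp_all add: accept_from_def)
    qed
  qed (use n in simp)
  then have "bf_dfa n {..<length xs} (nth xs)"
    using bf_dfa_if_trans_sg_subset_B_bf is_dfa_nth[of xs n] xs W6_transf sg n
    by (simp add: W6_bf_mem subset_iff)
  then show ?thesis
    using sg by blast
qed

theorem mainTheorem6:
  fixes n :: nat
  assumes "n \<ge> 3"
  shows "(\<exists>Alph delta. bf_dfa n Alph delta \<and> trans_sg n Alph delta = W6_bf n \<and>
            no_colliding n (trans_sg n Alph delta)) \<and>
         (\<forall>Alph delta. bf_dfa n Alph delta \<and> no_colliding n (trans_sg n Alph delta)
            \<longrightarrow> trans_sg n Alph delta \<subseteq> W6_bf n)"
proof
  show "\<exists>Alph delta. bf_dfa n Alph delta \<and> trans_sg n Alph delta = W6_bf n \<and>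
      no_colliding n (trans_sg n Alph delta)"
    using W6_bf_is_trans_sg_of_bf_dfa[OF assms] no_colliding_if_subset_W6_bf by blast
  show "\<forall>Alph delta. bf_dfa n Alph delta \<and> no_colliding n (trans_sg n Alph delta)
      \<longrightarrow> trans_sg n Alph delta \<subseteq> W6_bf n"
    using trans_sg_subset_B_bf B_bf_no_colliding_imp_W6_bf[OF assms] by blast
qed

end
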